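(* Let $K\ge 2$ and let $O_1,\dots,O_K\subset\mathbb{R}^3$ be watertight objects with signed distance functions $SDF_1,\dots,SDF_K$, and set $SDF=[SDF_1,\ldots,SDF_K]:\mathbb{R}^3\to\mathbb{R}^K$. Then $SDF$ satisfies $\min^{(2)}(\mathbf{u})\ge 0$ at every point $\mathbf{p}\in\mathbb{R}^3$, where $\mathbf{u}=SDF(\mathbf{p})$, if and only if it satisfies $$\min^{(1)}(\mathbf{u})+\min^{(2)}(\mathbf{u})\ge 0$$ at every point $\mathbf{p}\in\mathbb{R}^3$, where $\mathbf{u}=SDF(\mathbf{p})$.
   Context: For a watertight object $O\subset\mathbb{R}^3$ with boundary $\partial O$, its signed distance function is $SDF_O(\mathbf{p})=-\min_{\mathbf{q}\in\partial O}\|\mathbf{p}-\mathbf{q}\|$ if $\mathbf{p}\in O$ and $SDF_O(\mathbf{p})=\min_{\mathbf{q}\in\partial O}\|\mathbf{p}-\mathbf{q}\|$ if $\mathbf{p}\notin O$ (negative inside, positive outside). For a vector $\mathbf{u}\in\mathbb{R}^K$, $\min^{(n)}(\mathbf{u})$ denotes the $n$-th smallest entry of $\mathbf{u}$ (counted with multiplicity), so $\min^{(1)}$ is the minimum and $\min^{(2)}$ the second smallest entry. *)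

theory Defs
  imports "HOL-Analysis.Analysis"
begin

text \<open>A watertight object: a nonempty compact solid that is the closure of its
interior (regular closed), so inside/outside and the boundary are well defined.\<close>
definition watertight :: "(real^3) set \<Rightarrow> bool" where
  "watertight S \<longleftrightarrow> S \<noteq> {} \<and> compact S \<and> closure (interior S) = S"

definition sdf :: "(real^3) set \<Rightarrow> real^3 \<Rightarrow> real" where
  "sdf S p = (if p \<in> S then - infdist p (frontier S) else infdist p (frontier S))"

text \<open>n-th smallest entry (counted with multiplicity), n \<ge> 1.\<close>
definition kmin :: "nat \<Rightarrow> real list \<Rightarrow> real" where
  "kmin n u = sort u ! (n - 1)"

end

theory Submission
  imports Defs "HOL-Combinatorics.Permutations"
begin

text \<open>If the two smallest signed distances at a point p sum to a negative number, then the
smaller one is some -d < 0, so the open ball of radius d around p lies inside one object,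
while the other object comes within distance less than d of p. As watertight objects are
the closures of their interiors, the ball then also meets the interior of the second
object, and at such a point two signed distances are negative, i.e. the second smallest
one is. The converse direction is just the fact that the smallest entry is at most the
second smallest.\<close>

lemma sort_nth_permutation:
  fixes xs :: "'a::linorder list"
  obtains p where "p permutes {..<length xs}" "\<forall>k<length xs. sort xs ! k = xs ! p k"
proof -
  have "mset (sort xs) = mset xs" by simp
  then obtain p where "p permutes {..<length xs}" "permute_list p xs = sort xs"
    by (rule mset_eq_permutation)
  then show thesis using that by (metis permute_list_nth)
qed

lemma sort_nth_0_le_nth_1:
  fixes xs :: "'a::linorder list"
  assumes "length xs \<ge> 2"
  shows "sort xs ! 0 \<le> sort xs ! 1"
  using assms by (intro sorted_nth_mono) auto

lemma sort_nth_0_1_attained: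
  fixes xs :: "'a::linorder list"
  assumes "length xs \<ge> 2"
  obtains i j where "i < length xs" "j < length xs" "i \<noteq> j"
    "sort xs ! 0 = xs ! i" "sort xs ! 1 = xs ! j"
proof -
  obtain p where p: "p permutes {..<length xs}" "\<forall>k<length xs. sort xs ! k = xs ! p k"
    by (rule sort_nth_permutation)
  have "0 < length xs" "1 < length xs" using assms by linarith+
  then have "p 0 < length xs" "p 1 < length xs"
    by (metis lessThan_iff permutes_in_image[OF p(1)])+
  moreover have "p 0 \<noteq> p 1"
    using permutes_inj[OF p(1)] by (metis injD zero_neq_one)
  moreover have "sort xs ! 0 = xs ! p 0" "sort xs ! 1 = xs ! p 1"
    using p(2) \<open>0 < length xs\<close> \<open>1 < length xs\<close> by blast+
  ultimately show thesis by (rule that)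
qed

lemma sort_nth_1_le_max:
  fixes xs :: "'a::linorder list"
  assumes "i < length xs" "j < length xs" "i \<noteq> j"
  shows "sort xs ! 1 \<le> max (xs ! i) (xs ! j)"
proof -
  obtain p where p: "p permutes {..<length xs}" "\<forall>k<length xs. sort xs ! k = xs ! p k"
    by (rule sort_nth_permutation)
  have q: "inv p permutes {..<length xs}" using p(1) by (rule permutes_inv)
  have "inv p i \<noteq> inv p j"
    using permutes_inj[OF q] assms(3) by (metis injD)
  then obtain k where k: "k \<in> {i, j}" "inv p k \<ge> 1"
    by (metis insertCI less_one not_less)
  have k_len: "inv p k < length xs"
    using k assms by (metis insert_iff singletonD lessThan_iff permutes_in_image[OF q])
  have "sort xs ! 1 \<le> sort xs ! inv p k"
    using k k_len by (intro sorted_nth_mono) auto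
  also have "\<dots> = xs ! k"
    using p(2) k_len by (simp add: permutes_inverses(1)[OF p(1)])
  also have "\<dots> \<le> max (xs ! i) (xs ! j)"
    using k(1) by auto
  finally show ?thesis .
qed

lemma frontier_nonempty_if_watertight:
  assumes "watertight S"
  shows "frontier S \<noteq> {}"
proof -
  have "S \<noteq> {}" "compact S" using assms by (auto simp: watertight_def)
  moreover have "S \<noteq> UNIV"
    using \<open>compact S\<close> compact_imp_bounded not_bounded_UNIV by blast
  ultimately show ?thesis by (intro frontier_not_empty)
qed

lemma sdf_neg_if_in_interior:
  assumes "frontier S \<noteq> {}" "q \<in> interior S"
  shows "sdf S q < 0"
proof -
  have "q \<notin> frontier S" using assms(2) by (simp add: frontier_def)
  then have "infdist q (frontier S) > 0"
    using assms(1) infdist_pos_not_in_closed frontier_closed by blast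
  then show ?thesis using assms(2) interior_subset by (auto simp: sdf_def)
qed

lemma ball_neg_sdf_subset_interior: "ball p (- sdf S p) \<subseteq> interior S"
proof (cases "sdf S p < 0")
  case True
  then have "p \<in> S"
    using infdist_nonneg[of p "frontier S"] by (auto simp: sdf_def split: if_splits)
  define r where "r = infdist p (frontier S)"
  have r: "- sdf S p = r" using \<open>p \<in> S\<close> by (simp add: sdf_def r_def)
  have no_frontier: "ball p r \<inter> frontier S = {}"
    using infdist_le[of _ "frontier S" p] by (fastforce simp: r_def)
  have "ball p r \<subseteq> S"
  proof (rule ccontr)
    assume "\<not> ball p r \<subseteq> S"
    then have "ball p r - S \<noteq> {}" by blast
    moreover have "ball p r \<inter> S \<noteq> {}" using True r \<open>p \<in> S\<close> by force
    ultimately have "ball p r \<inter> frontier S \<noteq> {}"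
      by (intro connected_Int_frontier) auto
    then show False using no_frontier by simp
  qed
  then show ?thesis using r by (simp add: interior_maximal)
qed (simp add: ball_empty)

lemma ball_meets_interior_if_sdf_less:
  assumes "closure (interior T) = T" "frontier T \<noteq> {}" "sdf T p < d" "d > 0"
  shows "ball p d \<inter> interior T \<noteq> {}"
proof -
  have "closed T" using assms(1) by (metis closed_closure)
  obtain y where y: "y \<in> T" "dist p y < d"
  proof (cases "p \<in> T")
    case True
    then show thesis using that assms(4) by auto
  next
    case False
    obtain y where "y \<in> frontier T" "infdist p (frontier T) = dist p y"
      using infdist_attains_inf assms(2) frontier_closed by metis
    moreover have "frontier T \<subseteq> T"
      using \<open>closed T\<close> by (simp add: frontier_subset_closed)
    ultimately show thesis using that False assms(3) by (auto simp: sdf_def)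
  qed
  then have "ball p d \<inter> closure (interior T) \<noteq> {}" using assms(1) by auto
  then show ?thesis using open_Int_closure_eq_empty[of "ball p d" "interior T"] by auto
qed

lemma interiors_meet_if_sdf_sum_neg:
  assumes "watertight S" "watertight T" "sdf S p + sdf T p < 0"
  shows "interior S \<inter> interior T \<noteq> {}"
proof -
  have meet: "interior S \<inter> interior T \<noteq> {}"
    if "watertight T" "sdf S p \<le> sdf T p" "sdf S p + sdf T p < 0" for S T
  proof -
    define d where "d = - sdf S p"
    have "d > 0" "sdf T p < d" using that d_def by linarith+
    moreover have "closure (interior T) = T" using \<open>watertight T\<close> by (simp add: watertight_def)
    ultimately have "ball p d \<inter> interior T \<noteq> {}"
      using ball_meets_interior_if_sdf_less frontier_nonempty_if_watertight[OF \<open>watertight T\<close>]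
      by blast
    then show ?thesis using ball_neg_sdf_subset_interior[of p S] d_def by blast
  qed
  show ?thesis
    using meet[of T S] meet[of S T] assms by (metis Int_commute add.commute nle_le)
qed

lemma sdf_two_smallest_sum_nonneg:
  fixes Os :: "(real^3) set list"
  assumes "length Os \<ge> 2" "\<forall>S\<in>set Os. watertight S"
    and second_nonneg: "\<forall>q. sort (map (\<lambda>S. sdf S q) Os) ! 1 \<ge> 0"
  shows "sort (map (\<lambda>S. sdf S p) Os) ! 0 + sort (map (\<lambda>S. sdf S p) Os) ! 1 \<ge> 0"
proof (rule ccontr)
  assume sum_neg: "\<not> ?thesis"
  obtain i j where ij: "i < length Os" "j < length Os" "i \<noteq> j"
    "sort (map (\<lambda>S. sdf S p) Os) ! 0 = sdf (Os ! i) p"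
    "sort (map (\<lambda>S. sdf S p) Os) ! 1 = sdf (Os ! j) p"
    using sort_nth_0_1_attained[of "map (\<lambda>S. sdf S p) Os"] assms(1) by auto
  have watertight: "watertight (Os ! i)" "watertight (Os ! j)" using assms(2) ij by auto
  have "sdf (Os ! i) p + sdf (Os ! j) p < 0" using sum_neg ij by linarith
  then obtain q where "q \<in> interior (Os ! i)" "q \<in> interior (Os ! j)"
    using interiors_meet_if_sdf_sum_neg[OF watertight] by blast
  then have "sdf (Os ! i) q < 0" "sdf (Os ! j) q < 0"
    using sdf_neg_if_in_interior frontier_nonempty_if_watertight watertight by blast+
  then have "sort (map (\<lambda>S. sdf S q) Os) ! 1 < 0"
    using sort_nth_1_le_max[of i "map (\<lambda>S. sdf S q) Os" j] ij by auto
  then show False using second_nonneg by (meson not_le)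
qed

theorem theorem1:
  fixes Os :: "(real^3) set list"
  assumes "length Os \<ge> 2"
    and "\<forall>S\<in>set Os. watertight S"
  shows "(\<forall>p. kmin 2 (map (\<lambda>S. sdf S p) Os) \<ge> 0) \<longleftrightarrow>
         (\<forall>p. kmin 1 (map (\<lambda>S. sdf S p) Os) + kmin 2 (map (\<lambda>S. sdf S p) Os) \<ge> 0)"
proof -
  let ?u = "\<lambda>p. sort (map (\<lambda>S. sdf S p) Os)"
  have smallest_le_second: "?u p ! 0 \<le> ?u p ! 1" for p
    using assms(1) by (intro sort_nth_0_le_nth_1) simp
  have "(\<forall>p. ?u p ! 1 \<ge> 0) \<longleftrightarrow> (\<forall>p. ?u p ! 0 + ?u p ! 1 \<ge> 0)"
  proof
    assume "\<forall>p. ?u p ! 1 \<ge> 0"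
    then show "\<forall>p. ?u p ! 0 + ?u p ! 1 \<ge> 0" using sdf_two_smallest_sum_nonneg[OF assms] by blast
  next
    assume sum_nonneg: "\<forall>p. ?u p ! 0 + ?u p ! 1 \<ge> 0"
    show "\<forall>p. ?u p ! 1 \<ge> 0"
    proof
      fix p
      show "?u p ! 1 \<ge> 0" using sum_nonneg[rule_format, of p] smallest_le_second[of p] by linarith
    qed
  qed
  then show ?thesis by (simp add: kmin_def)
qed

end
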